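(* Let $d$ be a square-free positive integer, let $E=\mathbb{Q}(\sqrt{-d})$ with ring of integers $\mathcal{O}$, let $p$ be a prime number that splits in $E$, and let $\mathfrak{P}_1,\mathfrak{P}_2$ be the prime ideals of $\mathcal{O}$ lying above $p$. For a positive integer $r$ and $j\in\{1,2\}$, let $L_j^r=\mathfrak{P}_jv_j$ be the unary Hermitian lattice in a one-dimensional Hermitian space $Ev_j$ with $h(v_j)=r/p$. Then for every positive integer $r$ and every positive integer $m$, $L_1^r$ is represented by $I_m$ if and only if $L_2^r$ is represented by $I_m$. In particular, the set of positive integers $r$ with $L_1^r\in\mathfrak{S}_d(1)$ equals the set of positive integers $r$ with $L_2^r\in\mathfrak{S}_d(1)$.
   Context: A Hermitian space is a finite-dimensional $E$-vector space $V$ with a map $h:V\times V\to E$ that is $E$-linear in the first argument and satisfies $h(v,w)=\overline{h(w,v)}$; write $h(v)=h(v,v)$. A Hermitian lattice is a finitely generated $\mathcal{O}$-submodule of such a space; unary means the space is one-dimensional. It is positive definite integral if $h(v)\in\mathbb{Z}_{>0}$ for nonzero $v$ and $h(v,w)\in\mathcal{O}$ for all $v,w$ in it (the lattices $L_j^r$ above are positive definite integral). $I_m$ is $\mathcal{O}^m$ with $h(x,y)=\sum_{i=1}^m x_i\overline{y_i}$. A lattice $L$ is represented by $K$ if there is an injective $\mathcal{O}$-linear map $L\to K$ preserving $h$. $\mathfrak{S}_d(1)$ is the set of positive definite integral unary Hermitian lattices over $\mathcal{O}$ represented by $I_m$ for some $m\geq1$. *)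

theory Defs
  imports Complex_Main "HOL-Computational_Algebra.Polynomial" "HOL-Computational_Algebra.Primes" "HOL-Computational_Algebra.Squarefree"
begin

definition qfield :: "nat \<Rightarrow> complex set" where
  "qfield d = {of_real (of_rat a) + of_real (of_rat b) * \<i> * of_real (sqrt (real d)) | a b. True}"

definition OK :: "nat \<Rightarrow> complex set" where
  "OK d = {z \<in> qfield d. algebraic_int z}"

definition O_ideal :: "nat \<Rightarrow> complex set \<Rightarrow> bool" where
  "O_ideal d I \<longleftrightarrow> I \<subseteq> OK d \<and> 0 \<in> I \<and> (\<forall>x\<in>I. \<forall>y\<in>I. x + y \<in> I)
     \<and> (\<forall>a\<in>OK d. \<forall>x\<in>I. a * x \<in> I)"

definition O_prime_ideal :: "nat \<Rightarrow> complex set \<Rightarrow> bool" where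
  "O_prime_ideal d P \<longleftrightarrow> O_ideal d P \<and> P \<noteq> OK d
     \<and> (\<forall>x\<in>OK d. \<forall>y\<in>OK d. x * y \<in> P \<longrightarrow> x \<in> P \<or> y \<in> P)"

definition ideal_prod :: "nat \<Rightarrow> complex set \<Rightarrow> complex set \<Rightarrow> complex set" where
  "ideal_prod d I J = \<Inter>{K. O_ideal d K \<and> {x * y | x y. x \<in> I \<and> y \<in> J} \<subseteq> K}"

definition principal_ideal :: "nat \<Rightarrow> complex \<Rightarrow> complex set" where
  "principal_ideal d a = {a * x | x. x \<in> OK d}"

definition splits :: "nat \<Rightarrow> nat \<Rightarrow> bool" where
  "splits d p \<longleftrightarrow> (\<exists>P Q. O_prime_ideal d P \<and> O_prime_ideal d Q \<and> P \<noteq> Q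
      \<and> principal_ideal d (of_nat p) = ideal_prod d P Q)"

text \<open>The unary Hermitian lattice L = I v in the space E v with h(v) = c:
  its elements are x v with x in I, and h(x v, y v) = x * cnj y * c.
  It is represented by I_m = O^m (vectors indexed by i < m, zero outside) iff there is
  an injective O-linear map L \<rightarrow> O^m preserving h.\<close>
definition Ovec :: "nat \<Rightarrow> nat \<Rightarrow> (nat \<Rightarrow> complex) set" where
  "Ovec d m = {w. (\<forall>i<m. w i \<in> OK d) \<and> (\<forall>i\<ge>m. w i = 0)}"

definition unary_repr_by_I :: "nat \<Rightarrow> complex set \<Rightarrow> real \<Rightarrow> nat \<Rightarrow> bool" where
  "unary_repr_by_I d I c m \<longleftrightarrow>
     (\<exists>f :: complex \<Rightarrow> (nat \<Rightarrow> complex).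
        f ` I \<subseteq> Ovec d m \<and> inj_on f I
      \<and> (\<forall>x\<in>I. \<forall>y\<in>I. f (x + y) = (\<lambda>i. f x i + f y i))
      \<and> (\<forall>a\<in>OK d. \<forall>x\<in>I. f (a * x) = (\<lambda>i. a * f x i))
      \<and> (\<forall>x\<in>I. \<forall>y\<in>I. (\<Sum>i<m. f x i * cnj (f y i)) = x * cnj y * of_real c))"

definition unary_pos_def_integral :: "nat \<Rightarrow> complex set \<Rightarrow> real \<Rightarrow> bool" where
  "unary_pos_def_integral d I c \<longleftrightarrow>
     (\<forall>x\<in>I. x \<noteq> 0 \<longrightarrow> (\<exists>n::int. n > 0 \<and> x * cnj x * of_real c = of_int n))
   \<and> (\<forall>x\<in>I. \<forall>y\<in>I. x * cnj y * of_real c \<in> OK d)"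

definition in_S1 :: "nat \<Rightarrow> complex set \<Rightarrow> real \<Rightarrow> bool" where
  "in_S1 d I c \<longleftrightarrow> unary_pos_def_integral d I c \<and> (\<exists>m\<ge>1. unary_repr_by_I d I c m)"

end

theory Submission
  imports Defs
begin

text \<open>Complex conjugation restricts to the nontrivial automorphism of \<open>\<O>\<close>. A prime above \<open>p\<close>
  that is stable under it contains, with every \<open>x\<close>, the trace \<open>t = x + cnj x\<close> and the norm
  \<open>n = cnj x * x\<close>, which are rational integers and hence divisible by \<open>p\<close>; so
  \<open>x\<^sup>2 = t x - n \<in> p\<O>\<close>, and the prime lies in every prime above \<open>p\<close>. As \<open>\<P>\<^sub>1 \<noteq> \<P>\<^sub>2\<close>, conjugation
  therefore swaps \<open>\<P>\<^sub>1\<close> and \<open>\<P>\<^sub>2\<close>. Conjugating the coordinates of a representation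
  \<open>\<P>\<^sub>1 v \<rightarrow> I\<^sub>m\<close> gives one of \<open>\<P>\<^sub>2 v\<close>, since \<open>h(v)\<close> is real; integrality transfers likewise.\<close>

lemma cnj_image_iff: "x \<in> cnj ` A \<longleftrightarrow> cnj x \<in> A"
  by (metis complex_cnj_cnj image_iff)

lemma cnj_image_cnj_image [simp]: "cnj ` cnj ` A = A"
  by (simp add: image_image)

lemma qfield_cnj: "z \<in> qfield d \<Longrightarrow> cnj z \<in> qfield d"
proof -
  assume "z \<in> qfield d"
  then obtain a b where z: "z = of_real (of_rat a) + of_real (of_rat b) * \<i> * of_real (sqrt (real d))"
    unfolding qfield_def by blast
  have "cnj z = of_real (of_rat a) + of_real (of_rat (-b)) * \<i> * of_real (sqrt (real d))"
    by (simp add: z of_rat_minus)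
  thus ?thesis unfolding qfield_def by blast
qed

lemma OK_cnj_iff [simp]: "cnj z \<in> OK d \<longleftrightarrow> z \<in> OK d"
proof -
  have "z \<in> OK d \<Longrightarrow> cnj z \<in> OK d" for z
    unfolding OK_def using qfield_cnj by auto
  from this[of z] this[of "cnj z"] show ?thesis by auto
qed

lemma of_int_in_OK: "(of_int n :: complex) \<in> OK d"
proof -
  have "(of_int n :: complex) = of_real (of_rat (of_int n)) + of_real (of_rat 0) * \<i> * of_real (sqrt (real d))"
    by simp
  hence "(of_int n :: complex) \<in> qfield d" unfolding qfield_def by blast
  moreover have "algebraic_int (of_int n :: complex)" by (rule int_imp_algebraic_int) simp
  ultimately show ?thesis unfolding OK_def by blast
qed

lemma qfield_trace_norm_rational:
  assumes "z \<in> qfield d"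
  shows "z + cnj z \<in> \<rat>" "cnj z * z \<in> \<rat>"
proof -
  obtain a b where z: "z = of_real (of_rat a) + of_real (of_rat b) * \<i> * of_real (sqrt (real d))"
    using assms unfolding qfield_def by blast
  have "z + cnj z = of_real (of_rat (2 * a))"
    by (simp add: z complex_eq_iff of_rat_mult)
  thus "z + cnj z \<in> \<rat>" by simp
  have "cnj z * z = of_real (of_rat (a * a + of_nat d * b * b))"
    by (simp add: z complex_eq_iff of_rat_mult of_rat_add algebra_simps)
  thus "cnj z * z \<in> \<rat>" by simp
qed

lemma OK_Rats_imp_Ints: "z \<in> OK d \<Longrightarrow> z \<in> \<rat> \<Longrightarrow> z \<in> \<int>"
  unfolding OK_def using rational_algebraic_int_is_int by blast

lemma O_ideal_cnj_image:
  assumes "O_ideal d I"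
  shows "O_ideal d (cnj ` I)"
  using assms unfolding O_ideal_def by (auto simp: cnj_image_iff)

lemma O_prime_ideal_cnj_image:
  assumes "O_prime_ideal d P"
  shows "O_prime_ideal d (cnj ` P)"
proof -
  have "cnj ` P \<noteq> OK d"
  proof
    assume "cnj ` P = OK d"
    hence "x \<in> P \<longleftrightarrow> x \<in> OK d" for x by (metis OK_cnj_iff cnj_image_iff complex_cnj_cnj)
    hence "P = OK d" by blast
    with assms show False unfolding O_prime_ideal_def by blast
  qed
  moreover have "\<forall>x\<in>OK d. \<forall>y\<in>OK d. x * y \<in> cnj ` P \<longrightarrow> x \<in> cnj ` P \<or> y \<in> cnj ` P"
    using assms unfolding O_prime_ideal_def by (simp add: cnj_image_iff)
  ultimately show ?thesis
    using assms O_ideal_cnj_image unfolding O_prime_ideal_def by blast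
qed

lemma O_ideal_eq_OK_if_one:
  assumes "O_ideal d I" "1 \<in> I"
  shows "I = OK d"
proof
  show "I \<subseteq> OK d" using assms(1) unfolding O_ideal_def by blast
  show "OK d \<subseteq> I"
  proof
    fix a assume "a \<in> OK d"
    hence "a * 1 \<in> I" using assms unfolding O_ideal_def by blast
    thus "a \<in> I" by simp
  qed
qed

lemma proper_ideal_int_dvd:
  assumes I: "O_ideal d I" "I \<noteq> OK d" and "prime p" "of_nat p \<in> I" "of_int n \<in> I"
  shows "int p dvd n"
proof (rule ccontr)
  assume "\<not> int p dvd n"
  with \<open>prime p\<close> have "coprime (int p) n" by (simp add: prime_imp_coprime)
  then obtain u v where uv: "u * n + v * int p = 1"
    by (metis bezout_int coprime_iff_gcd_eq_1 gcd.commute)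
  have "(of_int u :: complex) * of_int n + of_int v * of_nat p \<in> I"
    using I(1) assms(4,5) of_int_in_OK unfolding O_ideal_def by blast
  hence "1 \<in> I" by (metis uv of_int_1 of_int_add of_int_mult of_int_of_nat_eq)
  with I show False using O_ideal_eq_OK_if_one by blast
qed

lemma cnj_invariant_ideal_subset_prime:
  assumes A: "O_ideal d A" "A \<noteq> OK d" "cnj ` A = A" "of_nat p \<in> A"
    and B: "O_prime_ideal d B" "of_nat p \<in> B" and "prime p"
  shows "A \<subseteq> B"
proof
  fix x assume x: "x \<in> A"
  have xO: "x \<in> OK d" using A(1) x unfolding O_ideal_def by blast
  have "cnj x \<in> A" using A(3) x by (metis cnj_image_iff)
  hence trace: "x + cnj x \<in> A" and norm: "cnj x * x \<in> A"
    using A(1) x xO unfolding O_ideal_def by auto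
  have "x + cnj x \<in> \<int>" "cnj x * x \<in> \<int>"
    using trace norm A(1) qfield_trace_norm_rational xO OK_Rats_imp_Ints
    unfolding O_ideal_def OK_def by blast+
  then obtain t n where t: "x + cnj x = of_int t" and n: "cnj x * x = of_int n"
    by (auto elim!: Ints_cases)
  obtain t' where t': "t = int p * t'"
    using proper_ideal_int_dvd[OF A(1,2) \<open>prime p\<close> A(4)] trace t by (metis dvdE)
  obtain n' where n': "n = int p * n'"
    using proper_ideal_int_dvd[OF A(1,2) \<open>prime p\<close> A(4)] norm n by (metis dvdE)
  have B_ideal: "\<forall>x\<in>B. \<forall>y\<in>B. x + y \<in> B" "\<forall>a\<in>OK d. \<forall>x\<in>B. a * x \<in> B"
    using B(1) unfolding O_prime_ideal_def O_ideal_def by auto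
  have "of_int t' * x \<in> OK d"
    using A(1) x of_int_in_OK unfolding O_ideal_def by blast
  hence "(of_int t' * x) * of_nat p + of_int (- n') * of_nat p \<in> B"
    using B_ideal B(2) of_int_in_OK by blast
  also have "(of_int t' * x) * of_nat p + of_int (- n') * of_nat p = (x + cnj x) * x - cnj x * x"
    using t n t' n' by (simp add: algebra_simps)
  also have "\<dots> = x * x" by (simp add: algebra_simps)
  finally have "x * x \<in> B" .
  thus "x \<in> B" using B(1) xO unfolding O_prime_ideal_def by blast
qed

lemma cnj_swaps_primes_above:
  assumes primes: "{P. O_prime_ideal d P \<and> of_nat p \<in> P} = {P1, P2}" and "P1 \<noteq> P2" and "prime p"
  shows "cnj ` P1 = P2"
proof (rule ccontr)
  have prime_above: "O_prime_ideal d P" "of_nat p \<in> P" if "P \<in> {P1, P2}" for P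
    using that unfolding primes[symmetric] by simp_all
  have above: "cnj ` P \<in> {P1, P2}" if "P \<in> {P1, P2}" for P
  proof -
    have "O_prime_ideal d (cnj ` P)" "of_nat p \<in> cnj ` P"
      using prime_above[OF that] O_prime_ideal_cnj_image by (auto simp: cnj_image_iff)
    thus ?thesis unfolding primes[symmetric] by simp
  qed
  have subset: "P \<subseteq> Q" if "P \<in> {P1, P2}" "Q \<in> {P1, P2}" "cnj ` P = P" for P Q
    using cnj_invariant_ideal_subset_prime[OF _ _ \<open>cnj ` P = P\<close> prime_above(2)[OF that(1)]
        prime_above[OF that(2)] \<open>prime p\<close>] prime_above(1)[OF that(1)]
    unfolding O_prime_ideal_def by blast
  assume "cnj ` P1 \<noteq> P2"
  hence "cnj ` P1 = P1" using above[of P1] by blast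
  moreover have "cnj ` P2 = P2"
    using above[of P2] \<open>cnj ` P1 = P1\<close> \<open>P1 \<noteq> P2\<close> cnj_image_cnj_image[of P2] by auto
  ultimately have "P1 \<subseteq> P2" "P2 \<subseteq> P1" using subset by auto
  with \<open>P1 \<noteq> P2\<close> show False by blast
qed

lemma unary_repr_by_I_cnj_image:
  assumes "unary_repr_by_I d I c m"
  shows "unary_repr_by_I d (cnj ` I) c m"
proof -
  obtain f where f1: "f ` I \<subseteq> Ovec d m" and f2: "inj_on f I"
    and f3: "\<forall>x\<in>I. \<forall>y\<in>I. f (x + y) = (\<lambda>i. f x i + f y i)"
    and f4: "\<forall>a\<in>OK d. \<forall>x\<in>I. f (a * x) = (\<lambda>i. a * f x i)"
    and f5: "\<forall>x\<in>I. \<forall>y\<in>I. (\<Sum>i<m. f x i * cnj (f y i)) = x * cnj y * of_real c"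
    using assms unfolding unary_repr_by_I_def by blast
  define g where "g x = (\<lambda>i. cnj (f (cnj x) i))" for x
  show ?thesis unfolding unary_repr_by_I_def
  proof (intro exI[of _ g] conjI ballI)
    show "g ` cnj ` I \<subseteq> Ovec d m"
    proof
      fix w assume "w \<in> g ` cnj ` I"
      then obtain x where x: "x \<in> I" "w = g (cnj x)" by blast
      have "f x \<in> Ovec d m" using f1 x(1) by blast
      thus "w \<in> Ovec d m" using x(2) unfolding Ovec_def g_def by simp
    qed
    show "inj_on g (cnj ` I)"
    proof
      fix x y assume xy: "x \<in> cnj ` I" "y \<in> cnj ` I" "g x = g y"
      have "f (cnj x) i = f (cnj y) i" for i
        using fun_cong[OF xy(3), of i] unfolding g_def by simp
      hence "f (cnj x) = f (cnj y)" by blast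
      hence "cnj x = cnj y" using f2 xy(1,2) unfolding inj_on_def cnj_image_iff by blast
      thus "x = y" by simp
    qed
  next
    fix x y assume "x \<in> cnj ` I" "y \<in> cnj ` I"
    thus "g (x + y) = (\<lambda>i. g x i + g y i)" using f3 unfolding g_def cnj_image_iff by simp
  next
    fix a x assume "a \<in> OK d" "x \<in> cnj ` I"
    thus "g (a * x) = (\<lambda>i. a * g x i)" using f4 unfolding g_def cnj_image_iff by simp
  next
    fix x y assume xy: "x \<in> cnj ` I" "y \<in> cnj ` I"
    have "(\<Sum>i<m. g x i * cnj (g y i)) = cnj (\<Sum>i<m. f (cnj x) i * cnj (f (cnj y) i))"
      unfolding g_def by (simp add: cnj_sum)
    also have "\<dots> = cnj (cnj x * cnj (cnj y) * of_real c)"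
      using f5 xy unfolding cnj_image_iff by simp
    finally show "(\<Sum>i<m. g x i * cnj (g y i)) = x * cnj y * of_real c" by simp
  qed
qed

lemma unary_pos_def_integral_cnj_image:
  assumes "unary_pos_def_integral d I c"
  shows "unary_pos_def_integral d (cnj ` I) c"
proof -
  have pos: "\<forall>x\<in>I. x \<noteq> 0 \<longrightarrow> (\<exists>n::int. n > 0 \<and> x * cnj x * of_real c = of_int n)"
    and integral: "\<forall>x\<in>I. \<forall>y\<in>I. x * cnj y * of_real c \<in> OK d"
    using assms unfolding unary_pos_def_integral_def by auto
  have "\<exists>n::int. n > 0 \<and> x * cnj x * of_real c = of_int n" if x: "cnj x \<in> I" "x \<noteq> 0" for x
  proof -
    obtain n :: int where "n > 0" "cnj x * x * of_real c = of_int n"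
      using pos[rule_format, OF x(1)] x(2) by auto
    thus ?thesis by (intro exI[of _ n]) (simp add: mult.commute)
  qed
  moreover have "x * cnj y * of_real c \<in> OK d" if "cnj x \<in> I" "cnj y \<in> I" for x y
  proof -
    have "cnj x * cnj (cnj y) * of_real c \<in> OK d"
      using integral that by blast
    also have "cnj x * cnj (cnj y) * of_real c = cnj (x * cnj y * of_real c)" by simp
    finally show ?thesis by (simp only: OK_cnj_iff)
  qed
  ultimately show ?thesis unfolding unary_pos_def_integral_def Ball_def cnj_image_iff by blast
qed

theorem lemma2:
  fixes d p :: nat and P1 P2 :: "complex set"
  assumes "d > 0" and "squarefree d"
    and "prime p" and "splits d p"
    and "{P. O_prime_ideal d P \<and> of_nat p \<in> P} = {P1, P2}" and "P1 \<noteq> P2"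
  shows "(\<forall>r m :: nat. r > 0 \<longrightarrow> m > 0 \<longrightarrow>
            (unary_repr_by_I d P1 (real r / real p) m \<longleftrightarrow> unary_repr_by_I d P2 (real r / real p) m))
       \<and> {r :: nat. r > 0 \<and> in_S1 d P1 (real r / real p)}
           = {r :: nat. r > 0 \<and> in_S1 d P2 (real r / real p)}"
proof -
  have swap: "cnj ` P1 = P2" "cnj ` P2 = P1"
    using cnj_swaps_primes_above[OF assms(5,6,3)] by auto
  have repr: "unary_repr_by_I d P1 c m \<longleftrightarrow> unary_repr_by_I d P2 c m" for c m
    using unary_repr_by_I_cnj_image[of d P1 c m] unary_repr_by_I_cnj_image[of d P2 c m]
    unfolding swap by blast
  have "unary_pos_def_integral d P1 c \<longleftrightarrow> unary_pos_def_integral d P2 c" for c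
    using unary_pos_def_integral_cnj_image[of d P1 c] unary_pos_def_integral_cnj_image[of d P2 c]
    unfolding swap by blast
  hence "in_S1 d P1 c \<longleftrightarrow> in_S1 d P2 c" for c
    unfolding in_S1_def using repr by simp
  thus ?thesis using repr by simp
qed

end
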